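(* Let $p=p(n)$ be a sequence of probabilities and $k\ge1$ a fixed integer. Suppose \[p\ge\frac{\log(n)+(2/k)\log(\log(n))+\omega(n)}{n}\] for some $\omega(n)\to+\infty$, and suppose that either $k\ge2$, or $n(1-p)\to0$, or $n(1-p)\to\infty$. Then a.a.s. $\Gamma\in G(n,p)$ has no star $k$-separations.
   Context: $G(n,p)$ is the Erdős–Rényi random graph on vertex set $V$, $|V|=n$, with each edge present independently with probability $p$; a.a.s. means with probability tending to $1$; $\log$ is natural logarithm. For a graph $\Delta$ with vertex set $W$, a separation of $\Delta$ is a subset $S\subset W$ with $S\ne\varnothing$, $S\ne W$, and no edges between $S$ and $W\setminus S$. $\mathrm{st}(a)$ is $a$ together with its neighbours. A star separation of $\Gamma$ is a pair $(a,S)$ with $a\in V$, $S\subset V\setminus\mathrm{st}(a)$, such that $S$ is a separation of the full subgraph $\Gamma\setminus\mathrm{st}(a)$; it is a star $k$-separation if $|S|=k$. *)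

theory Defs
  imports Complex_Main
begin

text \<open>Graphs on the vertex set V = {0..<n} are represented by their edge sets,
  i.e. sets of 2-element subsets of {0..<n}.\<close>

definition all_edges :: "nat \<Rightarrow> nat set set" where
  "all_edges n = {e. \<exists>a b. a < n \<and> b < n \<and> a \<noteq> b \<and> e = {a, b}}"

definition gnp_prob :: "nat \<Rightarrow> real \<Rightarrow> (nat set set \<Rightarrow> bool) \<Rightarrow> real" where
  "gnp_prob n p P = (\<Sum>E\<in>{E. E \<subseteq> all_edges n \<and> P E}.
      p ^ card E * (1 - p) ^ (card (all_edges n) - card E))"

definition star :: "nat set set \<Rightarrow> nat \<Rightarrow> nat set" where
  "star E a = insert a {b. {a, b} \<in> E}"

text \<open>S is a separation of the full subgraph of E on W.\<close>
definition is_separation :: "nat set set \<Rightarrow> nat set \<Rightarrow> nat set \<Rightarrow> bool" where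
  "is_separation E W S \<longleftrightarrow> S \<subseteq> W \<and> S \<noteq> {} \<and> S \<noteq> W \<and>
     (\<forall>x\<in>S. \<forall>y\<in>W - S. {x, y} \<notin> E)"

definition star_separation :: "nat \<Rightarrow> nat set set \<Rightarrow> nat \<Rightarrow> nat set \<Rightarrow> bool" where
  "star_separation n E a S \<longleftrightarrow> a < n \<and> S \<subseteq> {0..<n} - star E a \<and>
     is_separation E ({0..<n} - star E a) S"

definition star_k_separation :: "nat \<Rightarrow> nat \<Rightarrow> nat set set \<Rightarrow> nat \<Rightarrow> nat set \<Rightarrow> bool" where
  "star_k_separation n k E a S \<longleftrightarrow> star_separation n E a S \<and> card S = k"

end

theory Submission
  imports Defs "HOL-Real_Asymp.Real_Asymp"
begin

text \<open>
  If \<open>(a, S)\<close> is a star \<open>k\<close>-separation, then \<open>a\<close> has no neighbour in \<open>S\<close> and every vertex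
  outside \<open>S \<union> st(a)\<close> has no neighbour in \<open>S\<close>. For distinct vertices these conditions concern
  disjoint sets of potential edges, so their probabilities multiply. A union bound over \<open>S\<close> and
  \<open>a\<close>, in which the graphs where \<open>S\<close> is isolated are counted only once, bounds the probability
  for \<open>p \<le> 1/2\<close> by \<open>C n^k (1 + (np)^2) exp (-knp) + n^(k+1) exp (-sqrt n / 4)\<close>, and the
  hypothesis on \<open>p\<close> makes the first term \<open>O((1 + \<omega>^2) exp (-\<omega>))\<close>. For \<open>p \<ge> 1/2\<close> one also
  uses a vertex of \<open>\<Gamma> \<setminus> st(a)\<close> outside \<open>S\<close>; this gives the bound
  \<open>e^(k+2) (n(1-p))^(2k+1) exp (-n(1-p)/2) / n^(k-1)\<close>, which tends to \<open>0\<close> when \<open>k \<ge> 2\<close>, or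
  when \<open>n(1-p)\<close> tends to \<open>0\<close> or to \<open>\<infinity>\<close>.
\<close>

section \<open>Random subsets of a finite set\<close>

definition subset_prob :: "real \<Rightarrow> 'a set \<Rightarrow> ('a set \<Rightarrow> bool) \<Rightarrow> real" where
  "subset_prob p B Q = (\<Sum>F\<in>{F. F \<subseteq> B \<and> Q F}. p ^ card F * (1 - p) ^ (card B - card F))"

lemma gnp_prob_eq_subset_prob: "gnp_prob n p P = subset_prob p (all_edges n) P"
  unfolding gnp_prob_def subset_prob_def by simp

lemma finite_subsets_Collect: "finite B \<Longrightarrow> finite {F. F \<subseteq> B \<and> Q F}"
  by (rule finite_subset[of _ "Pow B"]) auto

lemma subset_prob_cong: "(\<And>F. F \<subseteq> B \<Longrightarrow> Q F = Q' F) \<Longrightarrow> subset_prob p B Q = subset_prob p B Q'"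
  unfolding subset_prob_def by (rule sum.cong) auto

lemma subset_prob_nonneg: "0 \<le> p \<Longrightarrow> p \<le> 1 \<Longrightarrow> 0 \<le> subset_prob p B Q"
  unfolding subset_prob_def by (intro sum_nonneg) auto

lemma subset_prob_mono:
  assumes "finite B" "0 \<le> p" "p \<le> 1" "\<And>F. F \<subseteq> B \<Longrightarrow> P F \<Longrightarrow> Q F"
  shows "subset_prob p B P \<le> subset_prob p B Q"
  unfolding subset_prob_def using assms by (intro sum_mono2 finite_subsets_Collect) auto

lemma subset_prob_Un_disjoint:
  assumes "finite B1" "finite B2" "B1 \<inter> B2 = {}"
  shows "subset_prob p (B1 \<union> B2) (\<lambda>F. Q1 (F \<inter> B1) \<and> Q2 (F \<inter> B2))
           = subset_prob p B1 Q1 * subset_prob p B2 Q2"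
proof -
  let ?X1 = "{F. F \<subseteq> B1 \<and> Q1 F}" and ?X2 = "{F. F \<subseteq> B2 \<and> Q2 F}"
  let ?w = "\<lambda>B F. p ^ card F * (1 - p) ^ (card B - card F)"
  have "subset_prob p B1 Q1 * subset_prob p B2 Q2 = (\<Sum>z\<in>?X1 \<times> ?X2. ?w B1 (fst z) * ?w B2 (snd z))"
    unfolding subset_prob_def sum_product sum.cartesian_product by (simp add: case_prod_beta)
  also have "\<dots> = subset_prob p (B1 \<union> B2) (\<lambda>F. Q1 (F \<inter> B1) \<and> Q2 (F \<inter> B2))"
    unfolding subset_prob_def
  proof (rule sum.reindex_bij_witness[of _ "\<lambda>F. (F \<inter> B1, F \<inter> B2)" "\<lambda>z. fst z \<union> snd z"])
    fix z assume z: "z \<in> ?X1 \<times> ?X2"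
    then have s1: "fst z \<subseteq> B1" and s2: "snd z \<subseteq> B2" by auto
    then have parts: "(fst z \<union> snd z) \<inter> B1 = fst z" "(fst z \<union> snd z) \<inter> B2 = snd z"
      using assms(3) by auto
    then show "((fst z \<union> snd z) \<inter> B1, (fst z \<union> snd z) \<inter> B2) = z" by simp
    show "fst z \<union> snd z \<in> {F. F \<subseteq> B1 \<union> B2 \<and> Q1 (F \<inter> B1) \<and> Q2 (F \<inter> B2)}"
      using z parts by auto
    have "finite (fst z)" "finite (snd z)" using s1 s2 assms(1,2) by (auto intro: finite_subset)
    then have cu: "card (fst z \<union> snd z) = card (fst z) + card (snd z)"
      using s1 s2 assms(3) by (intro card_Un_disjoint) auto
    have "card (B1 \<union> B2) = card B1 + card B2" using assms by (intro card_Un_disjoint) auto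
    moreover have "card (fst z) \<le> card B1" "card (snd z) \<le> card B2"
      using s1 s2 assms(1,2) by (auto intro: card_mono)
    ultimately have "card (B1 \<union> B2) - card (fst z \<union> snd z)
                     = (card B1 - card (fst z)) + (card B2 - card (snd z))"
      using cu by simp
    then show "?w (B1 \<union> B2) (fst z \<union> snd z) = ?w B1 (fst z) * ?w B2 (snd z)"
      using cu by (simp add: power_add)
  next
    fix F assume F: "F \<in> {F. F \<subseteq> B1 \<union> B2 \<and> Q1 (F \<inter> B1) \<and> Q2 (F \<inter> B2)}"
    then show "fst (F \<inter> B1, F \<inter> B2) \<union> snd (F \<inter> B1, F \<inter> B2) = F" by auto
    show "(F \<inter> B1, F \<inter> B2) \<in> ?X1 \<times> ?X2" using F by auto
  qed
  finally show ?thesis by simp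
qed

lemma subset_prob_True: "finite B \<Longrightarrow> subset_prob p B (\<lambda>_. True) = 1"
proof (induction B rule: finite_induct)
  case empty
  then show ?case by (simp add: subset_prob_def)
next
  case (insert x B)
  have "{F. F \<subseteq> {x}} = {{}, {x}}" by auto
  then have "subset_prob p {x} (\<lambda>_. True) = 1" unfolding subset_prob_def by simp
  moreover have "subset_prob p ({x} \<union> B) (\<lambda>F. True \<and> True)
                 = subset_prob p {x} (\<lambda>_. True) * subset_prob p B (\<lambda>_. True)"
    using insert by (intro subset_prob_Un_disjoint) auto
  ultimately show ?case using insert.IH by simp
qed

lemma subset_prob_blocks:
  assumes "finite I" "finite B" "\<forall>i\<in>I. Bl i \<subseteq> B"
    and "\<forall>i\<in>I. \<forall>j\<in>I. i \<noteq> j \<longrightarrow> Bl i \<inter> Bl j = {}"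
  shows "subset_prob p B (\<lambda>F. \<forall>i\<in>I. Q i (F \<inter> Bl i)) = (\<Prod>i\<in>I. subset_prob p (Bl i) (Q i))"
  using assms
proof (induction I arbitrary: B rule: finite_induct)
  case empty
  then show ?case using subset_prob_True by simp
next
  case (insert j I)
  let ?R = "\<lambda>G. \<forall>i\<in>I. Q i (G \<inter> Bl i)"
  have sub: "\<forall>i\<in>I. Bl i \<subseteq> B - Bl j"
  proof
    fix i assume i: "i \<in> I"
    then have "Bl i \<inter> Bl j = {}" using insert.prems(3) insert.hyps(2) by auto
    then show "Bl i \<subseteq> B - Bl j" using insert.prems(2) i by auto
  qed
  have "subset_prob p B (\<lambda>F. \<forall>i\<in>insert j I. Q i (F \<inter> Bl i))
        = subset_prob p (Bl j \<union> (B - Bl j)) (\<lambda>F. Q j (F \<inter> Bl j) \<and> ?R (F \<inter> (B - Bl j)))"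
  proof -
    have "\<forall>i\<in>I. F \<inter> (B - Bl j) \<inter> Bl i = F \<inter> Bl i" for F using sub by blast
    moreover have "Bl j \<union> (B - Bl j) = B" using insert.prems by auto
    ultimately show ?thesis by simp
  qed
  also have "\<dots> = subset_prob p (Bl j) (Q j) * subset_prob p (B - Bl j) ?R"
    using insert.prems by (intro subset_prob_Un_disjoint) (auto intro: finite_subset)
  also have "subset_prob p (B - Bl j) ?R = (\<Prod>i\<in>I. subset_prob p (Bl i) (Q i))"
    using insert.prems insert.IH[of "B - Bl j"] sub by auto
  finally show ?case using insert.hyps by simp
qed

lemma subset_prob_eq_empty: "finite B \<Longrightarrow> subset_prob p B (\<lambda>F. F = {}) = (1 - p) ^ card B"
proof -
  have "{F. F \<subseteq> B \<and> F = {}} = {{}}" by auto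
  then show "subset_prob p B (\<lambda>F. F = {}) = (1 - p) ^ card B" unfolding subset_prob_def by simp
qed

lemma subset_prob_disj:
  assumes "finite B" "\<And>F. \<not> (P F \<and> Q F)"
  shows "subset_prob p B (\<lambda>F. P F \<or> Q F) = subset_prob p B P + subset_prob p B Q"
proof -
  have "{F. F \<subseteq> B \<and> (P F \<or> Q F)} = {F. F \<subseteq> B \<and> P F} \<union> {F. F \<subseteq> B \<and> Q F}" by auto
  then show ?thesis unfolding subset_prob_def using assms
    by (simp add: sum.union_disjoint finite_subsets_Collect disjoint_iff)
qed

lemma subset_prob_mem:
  assumes "finite B" "e \<in> B"
  shows "subset_prob p B (\<lambda>F. e \<in> F) = p"
proof -
  have B: "{e} \<union> (B - {e}) = B" using assms by auto
  have "subset_prob p B (\<lambda>F. e \<in> F) = subset_prob p ({e} \<union> (B - {e})) (\<lambda>F. e \<in> F \<inter> {e} \<and> True)"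
    unfolding B by (rule subset_prob_cong) auto
  also have "\<dots> = subset_prob p {e} (\<lambda>G. e \<in> G) * subset_prob p (B - {e}) (\<lambda>_. True)"
    using assms by (intro subset_prob_Un_disjoint) auto
  also have "{F. F \<subseteq> {e} \<and> e \<in> F} = {{e}}" by auto
  then have "subset_prob p {e} (\<lambda>G. e \<in> G) = p" unfolding subset_prob_def by simp
  finally show ?thesis using subset_prob_True[of "B - {e}" p] assms by simp
qed

lemma subset_prob_diff:
  assumes "finite B"
  shows "subset_prob p B (\<lambda>F. P F \<and> \<not> Q F) = subset_prob p B P - subset_prob p B (\<lambda>F. P F \<and> Q F)"
proof -
  have "subset_prob p B P = subset_prob p B (\<lambda>F. (P F \<and> \<not> Q F) \<or> (P F \<and> Q F))"
    by (rule subset_prob_cong) auto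
  also have "\<dots> = subset_prob p B (\<lambda>F. P F \<and> \<not> Q F) + subset_prob p B (\<lambda>F. P F \<and> Q F)"
    using assms by (intro subset_prob_disj) auto
  finally show ?thesis by simp
qed

lemma subset_prob_Not:
  "finite B \<Longrightarrow> subset_prob p B (\<lambda>F. \<not> Q F) = 1 - subset_prob p B Q"
  using subset_prob_diff[of B p "\<lambda>_. True" Q] by (simp add: subset_prob_True)

lemma subset_prob_disj_le:
  assumes "finite B" "0 \<le> p" "p \<le> 1"
  shows "subset_prob p B (\<lambda>F. P F \<or> Q F) \<le> subset_prob p B P + subset_prob p B Q"
proof -
  have "subset_prob p B (\<lambda>F. P F \<or> Q F) = subset_prob p B (\<lambda>F. P F \<or> (Q F \<and> \<not> P F))"
    by (rule subset_prob_cong) auto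
  also have "\<dots> = subset_prob p B P + subset_prob p B (\<lambda>F. Q F \<and> \<not> P F)"
    using assms by (intro subset_prob_disj) auto
  also have "subset_prob p B (\<lambda>F. Q F \<and> \<not> P F) \<le> subset_prob p B Q"
    using assms by (intro subset_prob_mono) auto
  finally show ?thesis by simp
qed

lemma subset_prob_Bex_le:
  assumes "finite I" "finite B" "0 \<le> p" "p \<le> 1"
  shows "subset_prob p B (\<lambda>F. \<exists>i\<in>I. P i F) \<le> (\<Sum>i\<in>I. subset_prob p B (P i))"
  using assms(1)
proof (induction I rule: finite_induct)
  case empty
  have "subset_prob p B (\<lambda>F. False) = 0" unfolding subset_prob_def by simp
  then show ?case by simp
next
  case (insert j I)
  have "subset_prob p B (\<lambda>F. \<exists>i\<in>insert j I. P i F) = subset_prob p B (\<lambda>F. P j F \<or> (\<exists>i\<in>I. P i F))"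
    by (rule subset_prob_cong) auto
  also have "\<dots> \<le> subset_prob p B (P j) + subset_prob p B (\<lambda>F. \<exists>i\<in>I. P i F)"
    using assms by (intro subset_prob_disj_le) auto
  also have "\<dots> \<le> subset_prob p B (P j) + (\<Sum>i\<in>I. subset_prob p B (P i))"
    using insert.IH by simp
  finally show ?case using insert.hyps by simp
qed

lemma subset_prob_Bex_le_common:
  assumes "finite I" "finite B" "0 \<le> p" "p \<le> 1" "\<And>i F. i \<in> I \<Longrightarrow> C F \<Longrightarrow> P i F"
  shows "subset_prob p B (\<lambda>F. \<exists>i\<in>I. P i F)
           \<le> subset_prob p B C + (\<Sum>i\<in>I. subset_prob p B (P i) - subset_prob p B C)"
proof -
  have "subset_prob p B (\<lambda>F. \<exists>i\<in>I. P i F) \<le> subset_prob p B (\<lambda>F. C F \<or> (\<exists>i\<in>I. P i F \<and> \<not> C F))"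
    using assms by (intro subset_prob_mono) auto
  also have "\<dots> \<le> subset_prob p B C + subset_prob p B (\<lambda>F. \<exists>i\<in>I. P i F \<and> \<not> C F)"
    using assms by (intro subset_prob_disj_le) auto
  also have "\<dots> \<le> subset_prob p B C + (\<Sum>i\<in>I. subset_prob p B (\<lambda>F. P i F \<and> \<not> C F))"
    using assms by (intro add_left_mono subset_prob_Bex_le) auto
  also have "(\<Sum>i\<in>I. subset_prob p B (\<lambda>F. P i F \<and> \<not> C F))
             = (\<Sum>i\<in>I. subset_prob p B (P i) - subset_prob p B C)"
  proof (rule sum.cong[OF refl])
    fix i assume "i \<in> I"
    then have "subset_prob p B (\<lambda>F. P i F \<and> C F) = subset_prob p B C"
      using assms(5) by (intro subset_prob_cong) auto
    then show "subset_prob p B (\<lambda>F. P i F \<and> \<not> C F) = subset_prob p B (P i) - subset_prob p B C"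
      using subset_prob_diff[OF assms(2)] by simp
  qed
  finally show ?thesis .
qed

section \<open>Edge blocks of a star separation\<close>

lemma finite_all_edges: "finite (all_edges n)"
  by (rule finite_subset[of _ "Pow {0..<n}"]) (auto simp: all_edges_def)

definition edges_to :: "nat set \<Rightarrow> nat \<Rightarrow> nat set set" where
  "edges_to S i = (\<lambda>s. {i, s}) ` S"

text \<open>Whether \<open>(a, S)\<close> is a star separation is decided by the edges in the blocks
  \<open>sep_block S a i\<close>, \<open>i \<notin> S\<close>.\<close>

definition sep_block :: "nat set \<Rightarrow> nat \<Rightarrow> nat \<Rightarrow> nat set set" where
  "sep_block S a i = (if i = a then edges_to S a else insert {i, a} (edges_to S i))"

definition isolated_set :: "nat \<Rightarrow> nat set \<Rightarrow> nat set set \<Rightarrow> bool" where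
  "isolated_set n S E \<longleftrightarrow> (\<forall>i\<in>{0..<n} - S. E \<inter> edges_to S i = {})"

text \<open>With \<open>Z = {a}\<close>: \<open>S\<close> avoids \<open>st(a)\<close> and has no edges to the rest of \<open>\<Gamma> \<setminus> st(a)\<close>.
  With \<open>Z = {a, v}\<close> additionally \<open>v \<in> \<Gamma> \<setminus> st(a)\<close> lies outside \<open>S\<close>, so \<open>S\<close> is a separation.\<close>

definition star_sep_event :: "nat \<Rightarrow> nat set \<Rightarrow> nat \<Rightarrow> nat set \<Rightarrow> nat set set \<Rightarrow> bool" where
  "star_sep_event n S a Z E \<longleftrightarrow> (\<forall>i\<in>{0..<n} - S.
     if i \<in> Z then E \<inter> sep_block S a i = {} else {i, a} \<in> E \<or> E \<inter> sep_block S a i = {})"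

lemma edges_to_subset_all_edges:
  "S \<subseteq> {0..<n} \<Longrightarrow> i \<in> {0..<n} - S \<Longrightarrow> edges_to S i \<subseteq> all_edges n"
  unfolding edges_to_def all_edges_def by fastforce

lemma sep_block_subset_all_edges:
  "S \<subseteq> {0..<n} \<Longrightarrow> a \<in> {0..<n} - S \<Longrightarrow> i \<in> {0..<n} - S \<Longrightarrow> sep_block S a i \<subseteq> all_edges n"
  unfolding sep_block_def using edges_to_subset_all_edges[of S n] by (auto simp: all_edges_def)

lemma edges_to_disjoint: "i \<notin> S \<Longrightarrow> j \<notin> S \<Longrightarrow> i \<noteq> j \<Longrightarrow> edges_to S i \<inter> edges_to S j = {}"
  unfolding edges_to_def by (auto simp: doubleton_eq_iff)

lemma sep_block_disjoint:
  "a \<notin> S \<Longrightarrow> i \<notin> S \<Longrightarrow> j \<notin> S \<Longrightarrow> i \<noteq> j \<Longrightarrow> sep_block S a i \<inter> sep_block S a j = {}"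
  unfolding sep_block_def edges_to_def by (auto simp: doubleton_eq_iff)

lemma finite_edges_to: "finite S \<Longrightarrow> finite (edges_to S i)"
  unfolding edges_to_def by auto

lemma finite_sep_block: "finite S \<Longrightarrow> finite (sep_block S a i)"
  unfolding sep_block_def edges_to_def by auto

lemma card_edges_to: "finite S \<Longrightarrow> i \<notin> S \<Longrightarrow> card (edges_to S i) = card S"
  unfolding edges_to_def by (rule card_image) (auto simp: inj_on_def doubleton_eq_iff)

lemma card_sep_block:
  assumes "finite S" "a \<notin> S" "i \<notin> S" "i \<noteq> a"
  shows "card (sep_block S a i) = card S + 1"
proof -
  have "{i, a} \<notin> edges_to S i" using assms unfolding edges_to_def by (auto simp: doubleton_eq_iff)
  then show ?thesis using assms unfolding sep_block_def by (simp add: card_edges_to finite_edges_to)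
qed

lemma star_sep_event_antimono:
  "Z' \<subseteq> Z \<Longrightarrow> star_sep_event n S a Z E \<Longrightarrow> star_sep_event n S a Z' E"
  unfolding star_sep_event_def by (metis subsetD)

lemma isolated_set_imp_star_sep_event:
  "a \<in> {0..<n} - S \<Longrightarrow> isolated_set n S E \<Longrightarrow> star_sep_event n S a {a} E"
  unfolding isolated_set_def star_sep_event_def sep_block_def by auto

lemma star_k_separation_imp_star_sep_event:
  assumes "star_k_separation n k E a S"
  shows "S \<subseteq> {0..<n}" "card S = k" "a \<in> {0..<n} - S"
    "\<exists>v\<in>{0..<n} - S - {a}. star_sep_event n S a {a, v} E"
proof -
  let ?W = "{0..<n} - star E a"
  have a: "a < n" and SW: "S \<subseteq> ?W" and ne: "S \<noteq> ?W"
    and sep: "\<forall>x\<in>S. \<forall>y\<in>?W - S. {x, y} \<notin> E" and "card S = k"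
    using assms unfolding star_k_separation_def star_separation_def is_separation_def by auto
  then show "S \<subseteq> {0..<n}" "card S = k" by auto
  have no_a: "E \<inter> sep_block S a a = {}"
    using SW unfolding sep_block_def edges_to_def star_def by auto
  show "a \<in> {0..<n} - S" using a SW unfolding star_def by auto
  have outside: "{i, a} \<in> E \<or> E \<inter> sep_block S a i = {}" if "i \<in> {0..<n} - S - {a}" for i
  proof (cases "{i, a} \<in> E")
    case False
    then have "i \<in> ?W - S" using that unfolding star_def by (auto simp: insert_commute)
    then show ?thesis using sep that unfolding sep_block_def edges_to_def by (auto simp: insert_commute)
  qed simp
  obtain v where v: "v \<in> ?W - S" using SW ne by blast
  then have "v \<in> {0..<n} - S - {a}" "{v, a} \<notin> E"
    unfolding star_def by (auto simp: insert_commute)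
  moreover from this have "star_sep_event n S a {a, v} E"
    using no_a outside unfolding star_sep_event_def by auto
  ultimately show "\<exists>v\<in>{0..<n} - S - {a}. star_sep_event n S a {a, v} E" by blast
qed

lemma prob_isolated_set:
  assumes "S \<subseteq> {0..<n}" "card S = k"
  shows "subset_prob p (all_edges n) (isolated_set n S) = (1 - p) ^ (k * (n - k))"
proof -
  have fS: "finite S" using assms(1) by (rule finite_subset) simp
  have "subset_prob p (all_edges n) (isolated_set n S)
        = (\<Prod>i\<in>{0..<n} - S. subset_prob p (edges_to S i) (\<lambda>G. G = {}))"
    unfolding isolated_set_def
    using assms edges_to_subset_all_edges[of S n] edges_to_disjoint[of _ S]
    by (intro subset_prob_blocks) (auto simp: finite_all_edges)
  also have "\<dots> = (\<Prod>i\<in>{0..<n} - S. (1 - p) ^ k)"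
    using fS assms by (intro prod.cong) (auto simp: subset_prob_eq_empty card_edges_to finite_edges_to)
  also have "\<dots> = (1 - p) ^ (k * (n - k))"
    using assms fS by (simp add: card_Diff_subset power_mult)
  finally show ?thesis .
qed

lemma prob_star_sep_event:
  assumes S: "S \<subseteq> {0..<n}" "card S = k" and Z: "a \<in> Z" "Z \<subseteq> {0..<n} - S"
  shows "subset_prob p (all_edges n) (star_sep_event n S a Z)
    = (1 - p) ^ k * ((1 - p) ^ (k + 1)) ^ (card Z - 1) * (p + (1 - p) ^ (k + 1)) ^ (n - k - card Z)"
proof -
  let ?V = "{0..<n} - S"
  let ?Q = "\<lambda>i F. if i \<in> Z then F = {} else {i, a} \<in> F \<or> F = {}"
  let ?f = "\<lambda>i. subset_prob p (sep_block S a i) (?Q i)"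
  have fS: "finite S" using S(1) by (rule finite_subset) simp
  have fZ: "finite Z" using Z(2) by (rule finite_subset) simp
  have aV: "a \<in> ?V" using Z by auto
  have "subset_prob p (all_edges n) (star_sep_event n S a Z)
        = subset_prob p (all_edges n) (\<lambda>E. \<forall>i\<in>?V. ?Q i (E \<inter> sep_block S a i))"
  proof -
    have "{i, a} \<in> E \<longleftrightarrow> {i, a} \<in> E \<inter> sep_block S a i" if "i \<notin> Z" for i E
      using that Z(1) by (auto simp: sep_block_def)
    then show ?thesis unfolding star_sep_event_def by simp
  qed
  also have "\<dots> = (\<Prod>i\<in>?V. ?f i)"
  proof (rule subset_prob_blocks)
    show "\<forall>i\<in>?V. sep_block S a i \<subseteq> all_edges n"
      and "\<forall>i\<in>?V. \<forall>j\<in>?V. i \<noteq> j \<longrightarrow> sep_block S a i \<inter> sep_block S a j = {}"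
      using aV sep_block_subset_all_edges[OF S(1)] sep_block_disjoint[of a S] by auto
  qed (auto simp: finite_all_edges)
  also have "\<dots> = ?f a * (\<Prod>i\<in>Z - {a}. ?f i) * (\<Prod>i\<in>?V - Z. ?f i)"
    using prod.subset_diff[OF Z(2), of ?f] prod.remove[OF fZ Z(1), of ?f] by (simp add: mult_ac)
  also have "?f a = (1 - p) ^ k"
    using fS S Z aV unfolding sep_block_def
    by (simp add: subset_prob_eq_empty card_edges_to finite_edges_to)
  also have "(\<Prod>i\<in>Z - {a}. ?f i) = (\<Prod>i\<in>Z - {a}. (1 - p) ^ (k + 1))"
  proof (rule prod.cong[OF refl])
    fix i assume i: "i \<in> Z - {a}"
    then have "i \<notin> S" "a \<notin> S" "i \<noteq> a" using Z by auto
    then show "?f i = (1 - p) ^ (k + 1)"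
      using i fS S(2) by (simp add: subset_prob_eq_empty card_sep_block finite_sep_block del: power_Suc)
  qed
  also have "(\<Prod>i\<in>?V - Z. ?f i) = (\<Prod>i\<in>?V - Z. p + (1 - p) ^ (k + 1))"
  proof (rule prod.cong[OF refl])
    fix i assume i: "i \<in> ?V - Z"
    then have "i \<notin> S" "a \<notin> S" "i \<noteq> a" "{i, a} \<in> sep_block S a i"
      using Z aV by (auto simp: sep_block_def)
    moreover have "?f i = subset_prob p (sep_block S a i) (\<lambda>F. {i, a} \<in> F)
                          + subset_prob p (sep_block S a i) (\<lambda>F. F = {})"
      using i fS by (auto intro: subset_prob_disj simp: finite_sep_block)
    ultimately show "?f i = p + (1 - p) ^ (k + 1)"
      using fS S(2)
      by (simp add: subset_prob_mem subset_prob_eq_empty finite_sep_block card_sep_block del: power_Suc)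
  qed
  finally have "subset_prob p (all_edges n) (star_sep_event n S a Z)
    = (1 - p) ^ k * ((1 - p) ^ (k + 1)) ^ card (Z - {a}) * (p + (1 - p) ^ (k + 1)) ^ card (?V - Z)"
    by simp
  moreover have "card (?V - Z) = n - k - card Z"
    using S Z fS fZ by (simp add: card_Diff_subset)
  ultimately show ?thesis using fZ Z by (simp add: card_Diff_singleton)
qed
lemma card_k_subsets: "card {S. S \<subseteq> {0..<n} \<and> card S = k} = n choose k"
  using n_subsets[of "{0..<n}" k] by simp

lemma finite_k_subsets: "finite {S. S \<subseteq> {0..<(n::nat)} \<and> card S = k}"
  by (rule finite_subsets_Collect) simp

lemma card_complement: "S \<subseteq> {0..<n} \<Longrightarrow> card S = k \<Longrightarrow> card ({0..<n} - S) = n - k"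
  by (simp add: card_Diff_subset finite_subset)

text \<open>An isolated \<open>S\<close> satisfies \<open>star_sep_event n S a {a}\<close> for every \<open>a \<notin> S\<close>; subtracting its
  probability from each term keeps the union bound from counting it \<open>n - k\<close> times.\<close>

lemma prob_star_k_separation_le_isolated:
  assumes "0 \<le> p" "p \<le> 1"
  shows "gnp_prob n p (\<lambda>E. \<exists>a S. star_k_separation n k E a S)
    \<le> real (n choose k) * ((1 - p) ^ (k * (n - k)) + real (n - k) *
         ((1 - p) ^ k * (p + (1 - p) ^ (k + 1)) ^ (n - k - 1) - (1 - p) ^ (k * (n - k))))"
proof -
  let ?KS = "{S. S \<subseteq> {0..<n} \<and> card S = k}" and ?A = "all_edges n"
  let ?qC = "(1 - p) ^ (k * (n - k))" and ?qA = "(1 - p) ^ k * (p + (1 - p) ^ (k + 1)) ^ (n - k - 1)"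
  have "gnp_prob n p (\<lambda>E. \<exists>a S. star_k_separation n k E a S)
        \<le> subset_prob p ?A (\<lambda>E. \<exists>S\<in>?KS. \<exists>a\<in>{0..<n} - S. star_sep_event n S a {a} E)"
    unfolding gnp_prob_eq_subset_prob
  proof (rule subset_prob_mono[OF finite_all_edges assms])
    fix E assume "\<exists>a S. star_k_separation n k E a S"
    then obtain a S where "star_k_separation n k E a S" by blast
    from star_k_separation_imp_star_sep_event[OF this]
    show "\<exists>S\<in>?KS. \<exists>a\<in>{0..<n} - S. star_sep_event n S a {a} E"
      using star_sep_event_antimono[of "{a}"] by blast
  qed
  also have "\<dots> \<le> (\<Sum>S\<in>?KS. subset_prob p ?A (\<lambda>E. \<exists>a\<in>{0..<n} - S. star_sep_event n S a {a} E))"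
    using assms by (intro subset_prob_Bex_le finite_k_subsets finite_all_edges)
  also have "\<dots> \<le> (\<Sum>S\<in>?KS. ?qC + real (n - k) * (?qA - ?qC))"
  proof (rule sum_mono)
    fix S assume S: "S \<in> ?KS"
    have "subset_prob p ?A (\<lambda>E. \<exists>a\<in>{0..<n} - S. star_sep_event n S a {a} E)
          \<le> subset_prob p ?A (isolated_set n S)
            + (\<Sum>a\<in>{0..<n} - S. subset_prob p ?A (star_sep_event n S a {a}) - subset_prob p ?A (isolated_set n S))"
      using assms isolated_set_imp_star_sep_event
      by (intro subset_prob_Bex_le_common finite_all_edges) auto
    also have "\<dots> = ?qC + real (n - k) * (?qA - ?qC)"
      using S by (simp add: prob_isolated_set prob_star_sep_event card_complement)
    finally show "subset_prob p ?A (\<lambda>E. \<exists>a\<in>{0..<n} - S. star_sep_event n S a {a} E)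
                  \<le> ?qC + real (n - k) * (?qA - ?qC)" .
  qed
  also have "\<dots> = real (n choose k) * (?qC + real (n - k) * (?qA - ?qC))"
    by (simp add: card_k_subsets)
  finally show ?thesis .
qed

lemma prob_star_k_separation_le_witness:
  assumes "0 \<le> p" "p \<le> 1"
  shows "gnp_prob n p (\<lambda>E. \<exists>a S. star_k_separation n k E a S)
    \<le> real (n choose k) * real (n - k) * real (n - k - 1) *
        ((1 - p) ^ k * (1 - p) ^ (k + 1) * (p + (1 - p) ^ (k + 1)) ^ (n - k - 2))"
proof -
  let ?KS = "{S. S \<subseteq> {0..<n} \<and> card S = k}" and ?A = "all_edges n"
  let ?q = "(1 - p) ^ k * (1 - p) ^ (k + 1) * (p + (1 - p) ^ (k + 1)) ^ (n - k - 2)"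
  let ?ev = "\<lambda>S a v. star_sep_event n S a {a, v}"
  have "gnp_prob n p (\<lambda>E. \<exists>a S. star_k_separation n k E a S)
        \<le> subset_prob p ?A (\<lambda>E. \<exists>S\<in>?KS. \<exists>a\<in>{0..<n} - S. \<exists>v\<in>{0..<n} - S - {a}. ?ev S a v E)"
    unfolding gnp_prob_eq_subset_prob
  proof (rule subset_prob_mono[OF finite_all_edges assms])
    fix E assume "\<exists>a S. star_k_separation n k E a S"
    then obtain a S where "star_k_separation n k E a S" by blast
    from star_k_separation_imp_star_sep_event[OF this]
    show "\<exists>S\<in>?KS. \<exists>a\<in>{0..<n} - S. \<exists>v\<in>{0..<n} - S - {a}. ?ev S a v E" by blast
  qed
  also have "\<dots> \<le> (\<Sum>S\<in>?KS. \<Sum>a\<in>{0..<n} - S. \<Sum>v\<in>{0..<n} - S - {a}. subset_prob p ?A (?ev S a v))"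
    using assms
    by (intro order.trans[OF subset_prob_Bex_le] sum_mono finite_k_subsets finite_all_edges) auto
  also have "\<dots> = (\<Sum>S\<in>?KS. \<Sum>a\<in>{0..<n} - S. \<Sum>v\<in>{0..<n} - S - {a}. ?q)"
    by (intro sum.cong refl) (auto simp: prob_star_sep_event)
  also have "\<dots> = real (n choose k) * real (n - k) * real (n - k - 1) * ?q"
    by (simp add: card_k_subsets card_complement finite_subset card_Diff_subset)
  finally show ?thesis .
qed

section \<open>Estimates in the three ranges of \<open>p\<close>\<close>

lemma power_le_exp_mult: "0 \<le> (y::real) \<Longrightarrow> y \<le> exp z \<Longrightarrow> y ^ N \<le> exp (real N * z)"
  by (simp add: exp_of_nat_mult power_mono)

lemma one_minus_power_ge: "0 \<le> (p::real) \<Longrightarrow> p \<le> 1 \<Longrightarrow> 1 - real k * p \<le> (1 - p) ^ k"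
  using Bernoulli_inequality[of "-p" k] by simp

lemma one_minus_power_le:
  "0 \<le> (p::real) \<Longrightarrow> p \<le> 1 \<Longrightarrow> (1 - p) ^ k \<le> 1 - real k * p + (real k)\<^sup>2 * p\<^sup>2"
proof (induction k)
  case 0
  then show ?case by simp
next
  case (Suc k)
  have "(1 - p) ^ Suc k \<le> (1 - p) * (1 - real k * p + (real k)\<^sup>2 * p\<^sup>2)"
    using Suc by (simp add: mult_left_mono)
  also have "\<dots> = 1 - real (Suc k) * p + (real k + (real k)\<^sup>2) * p\<^sup>2 - (real k)\<^sup>2 * p ^ 3"
    by (simp add: algebra_simps power2_eq_square power3_eq_cube)
  also have "\<dots> \<le> 1 - real (Suc k) * p + (real (Suc k))\<^sup>2 * p\<^sup>2"
  proof -
    have "(real k + (real k)\<^sup>2) * p\<^sup>2 \<le> (real (Suc k))\<^sup>2 * p\<^sup>2"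
      by (intro mult_right_mono) (auto simp: power2_eq_square algebra_simps)
    moreover have "0 \<le> (real k)\<^sup>2 * p ^ 3" using Suc by simp
    ultimately show ?thesis by linarith
  qed
  finally show ?case .
qed

lemma power_diff_le:
  fixes x y :: real
  assumes "0 \<le> y" "y \<le> x"
  shows "x ^ N - y ^ N \<le> real N * (x - y) * x ^ (N - 1)"
proof (induction N)
  case 0
  then show ?case by simp
next
  case (Suc N)
  have "x ^ Suc N - y ^ Suc N = x * (x ^ N - y ^ N) + y ^ N * (x - y)" by (simp add: algebra_simps)
  also have "\<dots> \<le> x * (real N * (x - y) * x ^ (N - 1)) + x ^ N * (x - y)"
    using Suc assms by (intro add_mono mult_left_mono mult_right_mono power_mono) auto
  also have "x * (real N * (x - y) * x ^ (N - 1)) = real N * (x - y) * x ^ N"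
    by (cases N) (auto simp: algebra_simps)
  finally show ?case by (simp add: algebra_simps)
qed

text \<open>\<open>p + (1 - p) ^ (k + 1)\<close> is the probability that a vertex outside \<open>S \<union> {a}\<close> is adjacent
  to \<open>a\<close> or has no neighbour in \<open>S\<close>.\<close>

lemma sep_weight_bounds:
  fixes p :: real
  assumes "0 \<le> p" "p \<le> 1"
  shows "(1 - p) ^ k \<le> p + (1 - p) ^ (k + 1)" "p + (1 - p) ^ (k + 1) \<le> 1"
    "p + (1 - p) ^ (k + 1) - (1 - p) ^ k = p * (1 - (1 - p) ^ k)"
proof -
  have q: "0 \<le> (1 - p) ^ k" "(1 - p) ^ k \<le> 1" using assms by (auto intro: power_le_one)
  show e: "p + (1 - p) ^ (k + 1) - (1 - p) ^ k = p * (1 - (1 - p) ^ k)" by (simp add: algebra_simps)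
  then show "(1 - p) ^ k \<le> p + (1 - p) ^ (k + 1)" using q assms by (smt (verit) mult_nonneg_nonneg)
  have "(1 - p) ^ (k + 1) \<le> (1 - p) * 1" using q assms by (simp add: mult_left_le)
  then show "p + (1 - p) ^ (k + 1) \<le> 1" by simp
qed

lemma sep_weight_le_exp_small:
  fixes p :: real
  assumes "1 \<le> k" "0 \<le> p" "p \<le> 1"
  shows "p + (1 - p) ^ (k + 1) \<le> exp (- real k * p + 2 * (real k)\<^sup>2 * p\<^sup>2)"
proof -
  have "p + (1 - p) ^ (k + 1) = p + (1 - p) * (1 - p) ^ k" by simp
  also have "\<dots> \<le> p + (1 - p) * (1 - real k * p + (real k)\<^sup>2 * p\<^sup>2)"
    using one_minus_power_le assms by (intro add_left_mono mult_left_mono) auto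
  also have "\<dots> = 1 - real k * p + (real k)\<^sup>2 * p\<^sup>2 + real k * p\<^sup>2 - (real k)\<^sup>2 * p ^ 3"
    by (simp add: algebra_simps power2_eq_square power3_eq_cube)
  also have "\<dots> \<le> 1 + (- real k * p + 2 * (real k)\<^sup>2 * p\<^sup>2)"
  proof -
    have "real k * p\<^sup>2 \<le> (real k)\<^sup>2 * p\<^sup>2"
      using assms by (intro mult_right_mono) (auto simp: power2_eq_square)
    moreover have "0 \<le> (real k)\<^sup>2 * p ^ 3" using assms by simp
    ultimately show ?thesis by linarith
  qed
  also have "\<dots> \<le> exp (- real k * p + 2 * (real k)\<^sup>2 * p\<^sup>2)" by (rule exp_ge_add_one_self)
  finally show ?thesis .
qed

lemma sep_weight_le_exp_half:
  fixes p :: real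
  assumes "1 \<le> k" "0 \<le> p" "p \<le> 1"
  shows "p + (1 - p) ^ (k + 1) \<le> exp (- p * (1 - p))"
proof -
  have "(1 - p) ^ k \<le> 1 - p"
    using assms power_decreasing[of 1 k "1 - p"] by simp
  then have "p + (1 - p) * (1 - p) ^ k \<le> p + (1 - p) * (1 - p)"
    using assms by (intro add_left_mono mult_left_mono) auto
  also have "\<dots> = 1 + (- p * (1 - p))" by (simp add: algebra_simps)
  also have "\<dots> \<le> exp (- p * (1 - p))" by (rule exp_ge_add_one_self)
  finally show ?thesis by simp
qed

lemma power_mult_split: "1 \<le> m \<Longrightarrow> (q::'a::monoid_mult) ^ (k * m) = q ^ k * (q ^ k) ^ (m - 1)"
  by (cases m) (simp_all add: power_add power_mult)

lemma isolated_term_le: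
  fixes p :: real
  assumes "k \<le> n" "0 \<le> p" "p \<le> 1"
  shows "(1 - p) ^ (k * (n - k)) \<le> exp ((real k)\<^sup>2) * exp (- real k * (real n * p))"
proof -
  have "(1 - p) ^ (k * (n - k)) \<le> exp (real (k * (n - k)) * (- p))"
    using assms exp_ge_add_one_self[of "- p"] by (intro power_le_exp_mult) auto
  also have "real (k * (n - k)) * (- p) = - real k * (real n * p) + real k * real k * p"
    using assms(1) by (simp add: of_nat_diff algebra_simps)
  also have "exp (- real k * (real n * p) + real k * real k * p)
             \<le> exp (- real k * (real n * p) + (real k)\<^sup>2)"
    using assms by (simp add: power2_eq_square mult_left_le)
  also have "\<dots> = exp ((real k)\<^sup>2) * exp (- real k * (real n * p))"
    by (simp add: exp_add[symmetric] add.commute)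
  finally show ?thesis .
qed

lemma near_isolated_term_nonneg:
  fixes p :: real
  assumes "k + 1 \<le> n" "0 \<le> p" "p \<le> 1"
  shows "(1 - p) ^ (k * (n - k)) \<le> (1 - p) ^ k * (p + (1 - p) ^ (k + 1)) ^ (n - k - 1)"
proof -
  have "((1 - p) ^ k) ^ (n - k - 1) \<le> (p + (1 - p) ^ (k + 1)) ^ (n - k - 1)"
    using assms sep_weight_bounds(1) by (intro power_mono) auto
  then show ?thesis
    using assms power_mult_split[of "n - k" "1 - p" k] by (simp add: mult_left_mono)
qed

lemma near_isolated_term_le_small:
  fixes p :: real
  assumes k: "1 \<le> k" and n: "k + 2 \<le> n" and p: "0 \<le> p" "p \<le> 1" and np: "real n * p\<^sup>2 \<le> 1"
  shows "real (n - k) * ((1 - p) ^ k * (p + (1 - p) ^ (k + 1)) ^ (n - k - 1) - (1 - p) ^ (k * (n - k)))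
    \<le> real k * exp (real k * (real k + 2) + 2 * (real k)\<^sup>2) * (real n * p)\<^sup>2 * exp (- real k * (real n * p))"
proof -
  define q x m where "q = 1 - p" and "x = p + q ^ (k + 1)" and "m = n - k"
  have q: "0 \<le> q ^ k" "q ^ k \<le> 1" using p by (auto simp: q_def intro: power_le_one)
  have x: "q ^ k \<le> x" "x \<le> 1" "x - q ^ k = p * (1 - q ^ k)"
    using sep_weight_bounds[OF p] unfolding x_def q_def by auto
  have m: "2 \<le> m" "real (m - 2) = real n - real k - 2" using n by (auto simp: m_def)
  have D0: "0 \<le> x ^ (m - 1) - (q ^ k) ^ (m - 1)" using q x by (simp add: power_mono)
  have "real m * (q ^ k * x ^ (m - 1) - q ^ (k * m)) = real m * (q ^ k * (x ^ (m - 1) - (q ^ k) ^ (m - 1)))"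
    using power_mult_split[of m q k] m by (simp add: algebra_simps)
  also have "\<dots> \<le> real m * (x ^ (m - 1) - (q ^ k) ^ (m - 1))"
    using D0 q by (intro mult_left_mono mult_left_le_one_le) auto
  also have "\<dots> \<le> real m * (real (m - 1) * (x - q ^ k) * x ^ (m - 2))"
  proof -
    have "m - 1 - 1 = m - 2" by simp
    then have "x ^ (m - 1) - (q ^ k) ^ (m - 1) \<le> real (m - 1) * (x - q ^ k) * x ^ (m - 2)"
      using power_diff_le[of "q ^ k" x "m - 1"] q(1) x(1) by simp
    then show ?thesis by (intro mult_left_mono) auto
  qed
  also have "\<dots> \<le> real n * (real n * (real k * p\<^sup>2) * x ^ (m - 2))"
  proof -
    have "1 - q ^ k \<le> real k * p" using one_minus_power_ge[OF p, of k] q_def by simp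
    then have "p * (1 - q ^ k) \<le> p * (real k * p)" using p by (intro mult_left_mono) auto
    then have "x - q ^ k \<le> real k * p\<^sup>2" using x by (simp add: power2_eq_square mult_ac)
    moreover have "0 \<le> x - q ^ k" "0 \<le> x" using x q by auto
    ultimately show ?thesis
      unfolding m_def by (intro mult_mono mult_nonneg_nonneg) auto
  qed
  also have "\<dots> = real k * (real n * p)\<^sup>2 * x ^ (m - 2)" by (simp add: power2_eq_square algebra_simps)
  also have "x ^ (m - 2) \<le> exp (real k * (real k + 2) + 2 * (real k)\<^sup>2) * exp (- real k * (real n * p))"
  proof -
    have "real (m - 2) * (- real k * p) \<le> - real k * (real n * p) + real k * (real k + 2)"
    proof -
      have "real (m - 2) * (- real k * p) = - real k * (real n * p) + real k * (real k + 2) * p"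
        unfolding m(2) by (simp add: algebra_simps)
      also have "\<dots> \<le> - real k * (real n * p) + real k * (real k + 2)"
        using p by (intro add_left_mono mult_left_le) auto
      finally show ?thesis .
    qed
    moreover have "real (m - 2) * (2 * (real k)\<^sup>2 * p\<^sup>2) \<le> 2 * (real k)\<^sup>2"
    proof -
      have "real (m - 2) * (2 * (real k)\<^sup>2 * p\<^sup>2) \<le> real n * (2 * (real k)\<^sup>2 * p\<^sup>2)"
        using m(2) by (intro mult_right_mono) auto
      also have "\<dots> = 2 * (real k)\<^sup>2 * (real n * p\<^sup>2)" by (simp add: mult_ac)
      also have "\<dots> \<le> 2 * (real k)\<^sup>2" using np by (simp add: mult_left_le)
      finally show ?thesis .
    qed
    ultimately have E: "real (m - 2) * (- real k * p + 2 * (real k)\<^sup>2 * p\<^sup>2)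
        \<le> (real k * (real k + 2) + 2 * (real k)\<^sup>2) + - real k * (real n * p)"
      unfolding distrib_left by linarith
    have "x ^ (m - 2) \<le> exp (real (m - 2) * (- real k * p + 2 * (real k)\<^sup>2 * p\<^sup>2))"
      using x q sep_weight_le_exp_small[OF k p] unfolding x_def q_def
      by (intro power_le_exp_mult) auto
    also have "\<dots> \<le> exp ((real k * (real k + 2) + 2 * (real k)\<^sup>2) + - real k * (real n * p))"
      using E by simp
    finally show ?thesis by (simp only: exp_add)
  qed
  then have "real k * (real n * p)\<^sup>2 * x ^ (m - 2)
      \<le> real k * (real n * p)\<^sup>2 * (exp (real k * (real k + 2) + 2 * (real k)\<^sup>2) * exp (- real k * (real n * p)))"
    by (rule mult_left_mono) simp
  finally show ?thesis unfolding q_def x_def m_def by (simp add: mult_ac)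
qed

lemma near_isolated_term_le_mid:
  fixes p :: real
  assumes k: "1 \<le> k" and n: "2 * k + 2 \<le> n" and p: "1 / sqrt (real n) \<le> p" "p \<le> 1 / 2"
  shows "real (n - k) * ((1 - p) ^ k * (p + (1 - p) ^ (k + 1)) ^ (n - k - 1) - (1 - p) ^ (k * (n - k)))
    \<le> real n * exp (- sqrt (real n) / 4)"
proof -
  define x N where "x = p + (1 - p) ^ (k + 1)" and "N = n - k - 1"
  have p0: "0 \<le> p" using p(1) by (rule order_trans[rotated]) simp
  have x: "0 \<le> x" "x \<le> 1" using sep_weight_bounds(2)[OF p0] p p0 unfolding x_def by auto
  have "sqrt (real n) / 4 = real n * (1 / sqrt (real n)) / 4" by (simp add: real_div_sqrt)
  also have "\<dots> \<le> real n * p / 4" by (intro divide_right_mono mult_left_mono) (use p(1) in auto)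
  also have "\<dots> = (real n / 2) * p / 2" by simp
  also have "\<dots> \<le> real N * p / 2" using n p0 by (intro divide_right_mono mult_right_mono) (auto simp: N_def)
  also have "\<dots> \<le> real N * (p * (1 - p))"
  proof -
    have "p * (1 / 2) \<le> p * (1 - p)" using p p0 by (intro mult_left_mono) auto
    then have "real N * (p * (1 / 2)) \<le> real N * (p * (1 - p))" by (rule mult_left_mono) simp
    then show ?thesis by simp
  qed
  finally have E: "sqrt (real n) / 4 \<le> real N * (p * (1 - p))" .
  have "x ^ N \<le> exp (real N * (- p * (1 - p)))"
    using x sep_weight_le_exp_half[OF k p0] p unfolding x_def by (intro power_le_exp_mult) auto
  also have "\<dots> \<le> exp (- sqrt (real n) / 4)" using E by simp
  finally have "x ^ N \<le> exp (- sqrt (real n) / 4)" .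
  moreover have "(1 - p) ^ k * x ^ N - (1 - p) ^ (k * (n - k)) \<le> x ^ N"
  proof -
    have "0 \<le> (1 - p) ^ (k * (n - k))" using p by simp
    moreover have "(1 - p) ^ k * x ^ N \<le> x ^ N"
      using x p p0 by (intro mult_left_le_one_le) (auto intro: power_le_one)
    ultimately show ?thesis by linarith
  qed
  moreover have "(1 - p) ^ (k * (n - k)) \<le> (1 - p) ^ k * x ^ N"
    using near_isolated_term_nonneg[of k n p] n p p0 unfolding x_def N_def by simp
  ultimately have "real (n - k) * ((1 - p) ^ k * x ^ N - (1 - p) ^ (k * (n - k)))
      \<le> real n * exp (- sqrt (real n) / 4)"
    by (intro mult_mono) auto
  then show ?thesis unfolding x_def N_def .
qed

lemma witness_term_le:
  fixes p :: real
  assumes k: "1 \<le> k" and n: "k + 2 \<le> n" and p: "1 / 2 \<le> p" "p \<le> 1"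
  shows "real (n choose k) * real (n - k) * real (n - k - 1) *
           ((1 - p) ^ k * (1 - p) ^ (k + 1) * (p + (1 - p) ^ (k + 1)) ^ (n - k - 2))
    \<le> exp (real k + 2) * (real n * (1 - p)) ^ (2 * k + 1) * exp (- (real n * (1 - p)) / 2) / real n ^ (k - 1)"
proof -
  define q x where "q = 1 - p" and "x = p + q ^ (k + 1)"
  have q: "0 \<le> q" "q \<le> 1 / 2" using p by (auto simp: q_def)
  have x: "0 \<le> x" "x \<le> 1" using sep_weight_bounds[of p k] p unfolding x_def q_def by auto
  have "x ^ (n - k - 2) \<le> exp (real (n - k - 2) * (- p * q))"
    using x sep_weight_le_exp_half[OF k] p unfolding x_def q_def by (intro power_le_exp_mult) auto
  also have "\<dots> \<le> exp (real k + 2) * exp (- (real n * q) / 2)"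
  proof -
    have "q * (1 / 2) \<le> q * p" using p q by (intro mult_left_mono) auto
    then have "- p * q \<le> - q / 2" by (simp add: mult.commute)
    then have "real (n - k - 2) * (- p * q) \<le> real (n - k - 2) * (- q / 2)"
      by (intro mult_left_mono) auto
    also have "\<dots> = - (real n * q) / 2 + (real k + 2) * q / 2" using n by (simp add: algebra_simps)
    also have "\<dots> \<le> (real k + 2) + - (real n * q) / 2"
    proof -
      have "(real k + 2) * q \<le> real k + 2" using q by (intro mult_left_le) auto
      then show ?thesis by linarith
    qed
    finally show ?thesis by (simp flip: exp_add)
  qed
  finally have xm: "x ^ (n - k - 2) \<le> exp (real k + 2) * exp (- (real n * q) / 2)" .
  have "real (n choose k) * real (n - k) * real (n - k - 1) \<le> real n ^ k * real n * real n"
    using binomial_le_pow[of k n] n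
    by (intro mult_mono) (auto simp del: of_nat_power simp: of_nat_power[symmetric])
  then have binom: "real (n choose k) * real (n - k) * real (n - k - 1) \<le> real n ^ (k + 2)"
    by (simp add: power_add power2_eq_square mult_ac)
  have "q ^ k * q ^ (k + 1) = q ^ (2 * k + 1)"
  proof -
    have "k + (k + 1) = 2 * k + 1" by simp
    then show ?thesis by (metis power_add)
  qed
  then have qx: "q ^ k * q ^ (k + 1) * x ^ (n - k - 2)
        \<le> q ^ (2 * k + 1) * (exp (real k + 2) * exp (- (real n * q) / 2))"
    using xm q by (metis mult_left_mono zero_le_power)
  have "real (n choose k) * real (n - k) * real (n - k - 1) * (q ^ k * q ^ (k + 1) * x ^ (n - k - 2))
      \<le> real n ^ (k + 2) * (q ^ (2 * k + 1) * (exp (real k + 2) * exp (- (real n * q) / 2)))"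
    by (rule mult_mono[OF binom qx]) (use q x in auto)
  also have "real n ^ (k + 2) * (q ^ (2 * k + 1) * (exp (real k + 2) * exp (- (real n * q) / 2)))
      = (real n * q) ^ (2 * k + 1) / real n ^ (k - 1) * (exp (real k + 2) * exp (- (real n * q) / 2))"
  proof -
    have "2 * k + 1 = (k + 2) + (k - 1)" using k by simp
    then have "real n ^ (2 * k + 1) = real n ^ (k + 2) * real n ^ (k - 1)" by (metis power_add)
    then show ?thesis using n by (simp add: power_mult_distrib field_simps)
  qed
  finally show ?thesis unfolding q_def x_def by (simp add: mult_ac)
qed

lemma prob_star_k_separation_le:
  fixes p :: real and k n :: nat
  defines "c \<equiv> exp ((real k)\<^sup>2) + real k * exp (real k * (real k + 2) + 2 * (real k)\<^sup>2)"
  assumes k: "1 \<le> k" and n: "2 * k + 2 \<le> n" and p: "0 \<le> p" "p \<le> 1"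
  shows "gnp_prob n p (\<lambda>E. \<exists>a S. star_k_separation n k E a S)
    \<le> c * real n ^ k * (1 + (real n * p)\<^sup>2) * exp (- real k * (real n * p))
      + real n ^ (k + 1) * exp (- sqrt (real n) / 4)
      + exp (real k + 2) * (real n * (1 - p)) ^ (2 * k + 1) * exp (- (real n * (1 - p)) / 2)
          / real n ^ (k - 1)"
    (is "?P \<le> ?A + ?B + ?C")
proof -
  let ?e = "exp (- real k * (real n * p))" and ?s = "real n * exp (- sqrt (real n) / 4)"
  have n': "k + 2 \<le> n" "k + 1 \<le> n" "k \<le> n" using n by auto
  have nonneg: "0 \<le> ?A" "0 \<le> ?B" "0 \<le> ?C" "0 \<le> ?s" using p by (simp_all add: c_def)
  show ?thesis
  proof (cases "1 / 2 \<le> p")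
    case True
    have "?P \<le> ?C"
      using prob_star_k_separation_le_witness[OF p, of n k] witness_term_le[OF k n'(1) True p(2)]
      by (rule order_trans)
    then show ?thesis using nonneg by linarith
  next
    case False
    let ?T1 = "(1 - p) ^ (k * (n - k))"
    let ?T2 = "real (n - k) * ((1 - p) ^ k * (p + (1 - p) ^ (k + 1)) ^ (n - k - 1) - ?T1)"
    have "exp ((real k)\<^sup>2) * ?e \<le> c * ?e" by (rule mult_right_mono) (simp_all add: c_def)
    with isolated_term_le[OF n'(3) p] have T1: "?T1 \<le> c * ?e" by (rule order_trans)
    have T2: "?T2 \<le> c * (real n * p)\<^sup>2 * ?e + ?s"
    proof (cases "real n * p\<^sup>2 \<le> 1")
      case True
      have "real k * exp (real k * (real k + 2) + 2 * (real k)\<^sup>2) * (real n * p)\<^sup>2 * ?e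
            \<le> c * (real n * p)\<^sup>2 * ?e"
        by (intro mult_right_mono) (simp_all add: c_def)
      with near_isolated_term_le_small[OF k n'(1) p True] have "?T2 \<le> c * (real n * p)\<^sup>2 * ?e"
        by (rule order_trans)
      then show ?thesis using nonneg by linarith
    next
      case False
      have "1 \<le> sqrt (real n * p\<^sup>2)" using False by simp
      also have "\<dots> = sqrt (real n) * p" using p by (simp add: real_sqrt_mult)
      finally have "1 / sqrt (real n) \<le> p" using n by (simp add: divide_le_eq mult.commute)
      then have "?T2 \<le> ?s" using near_isolated_term_le_mid[OF k n] \<open>\<not> 1 / 2 \<le> p\<close> by simp
      moreover have "0 \<le> c * (real n * p)\<^sup>2 * ?e" by (simp add: c_def)
      ultimately show ?thesis by linarith
    qed
    have "real (n choose k) \<le> real n ^ k"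
      using binomial_le_pow[OF n'(3)] by (metis of_nat_le_iff of_nat_power)
    moreover have "0 \<le> ?T1 + ?T2"
    proof -
      have "0 \<le> ?T2" using near_isolated_term_nonneg[OF n'(2) p] by simp
      then show ?thesis using p by simp
    qed
    ultimately have "real (n choose k) * (?T1 + ?T2) \<le> real n ^ k * (?T1 + ?T2)"
      by (rule mult_right_mono)
    with prob_star_k_separation_le_isolated[OF p, of n k] have "?P \<le> real n ^ k * (?T1 + ?T2)"
      by (rule order_trans)
    also have "\<dots> \<le> real n ^ k * (c * (1 + (real n * p)\<^sup>2) * ?e + ?s)"
      using T1 T2 by (intro mult_left_mono) (auto simp: algebra_simps)
    also have "\<dots> = ?A + ?B" by (simp add: algebra_simps)
    finally show ?thesis using nonneg by linarith
  qed
qed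

section \<open>Asymptotics\<close>

lemma power_le_mult_exp:
  fixes u c :: real
  assumes "0 \<le> u" "0 < c" "1 \<le> j"
  shows "u ^ j \<le> (real j / c) ^ j * exp (c * u)"
proof -
  have j: "real j > 0" using assms by simp
  have "c * u / real j \<le> exp (c * u / real j)"
    using exp_ge_add_one_self[of "c * u / real j"] by linarith
  then have "u \<le> real j / c * exp (c * u / real j)"
    using assms j by (simp add: field_simps)
  then have "u ^ j \<le> (real j / c * exp (c * u / real j)) ^ j"
    using assms by (intro power_mono) auto
  also have "\<dots> = (real j / c) ^ j * exp (c * u / real j) ^ j" by (simp only: power_mult_distrib)
  also have "exp (c * u / real j) ^ j = exp (c * u)" using j by (simp flip: exp_of_nat_mult)
  finally show ?thesis .
qed

lemma power2_mult_exp_antimono: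
  fixes a b :: real
  assumes k: "1 \<le> k" and a: "2 / real k \<le> a" and ab: "a \<le> b"
  shows "b\<^sup>2 * exp (- real k * b) \<le> a\<^sup>2 * exp (- real k * a)"
proof -
  have kp: "real k > 0" using k by simp
  have a0: "a > 0" using a kp by (smt (verit) divide_pos_pos)
  have "b / a = 1 + (b - a) / a" using a0 by (simp add: field_simps)
  also have "\<dots> \<le> exp ((b - a) / a)" by (rule exp_ge_add_one_self)
  finally have "(b / a)\<^sup>2 \<le> exp ((b - a) / a) ^ 2" using a0 ab by (intro power_mono) auto
  also have "\<dots> = exp (2 * ((b - a) / a))" by (simp add: exp_of_nat_mult[symmetric])
  also have "\<dots> \<le> exp (real k * (b - a))"
  proof -
    have "2 / a \<le> real k" using a a0 kp by (simp add: field_simps)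
    then have "2 / a * (b - a) \<le> real k * (b - a)" using ab by (intro mult_right_mono) auto
    then show ?thesis by simp
  qed
  finally have "b\<^sup>2 \<le> a\<^sup>2 * exp (real k * (b - a))" using a0 by (simp add: field_simps power_divide)
  then have "b\<^sup>2 * exp (- real k * b) \<le> a\<^sup>2 * exp (real k * (b - a)) * exp (- real k * b)"
    by (intro mult_right_mono) auto
  also have "\<dots> = a\<^sup>2 * exp (- real k * a)" by (simp add: mult.assoc exp_add[symmetric] algebra_simps)
  finally show ?thesis .
qed

text \<open>At \<open>t\<^sub>0 = ln n + (2 / k) ln (ln n) + w\<close> one has \<open>n^k exp (-k t\<^sub>0) = exp (-k w) / (ln n)^2\<close>,
  and the factor \<open>(ln n)^2\<close> absorbs \<open>t\<^sub>0^2\<close>.\<close>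

lemma threshold_bound:
  fixes t w :: real
  assumes k: "1 \<le> k" and n: "9 \<le> n" and w: "0 \<le> w"
    and t: "ln (real n) + 2 / real k * ln (ln (real n)) + w \<le> t"
  shows "real n ^ k * (1 + t\<^sup>2) * exp (- real k * t) \<le> (1 + (3 + w)\<^sup>2) * exp (- w)"
proof -
  define L where "L = ln (real n)"
  define t0 where "t0 = L + 2 / real k * ln L + w"
  have kp: "real k > 0" using k by simp
  have L2: "2 \<le> L"
  proof -
    have "exp (1::real) \<le> 3" using exp_le by simp
    then have "exp (1::real) * exp 1 \<le> 3 * 3" by (intro mult_mono) auto
    then have "exp 2 \<le> real n" using n by (simp add: exp_add[symmetric])
    then show ?thesis unfolding L_def using ln_ge_iff[of "real n" 2] n by simp
  qed
  have lnL: "0 \<le> ln L" "ln L \<le> L" using L2 ln_le_minus_one[of L] by auto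
  have k2: "2 / real k \<le> 2" using k by (simp add: field_simps)
  have t0t: "t0 \<le> t" using t unfolding t0_def L_def by simp
  have t0: "2 / real k \<le> t0"
  proof -
    have "0 \<le> 2 / real k * ln L" using lnL kp by simp
    then show ?thesis using k2 L2 w unfolding t0_def by linarith
  qed
  have key: "real n ^ k * exp (- real k * t0) = exp (- real k * w) / L\<^sup>2"
  proof -
    have "real n ^ k = exp (real k * L)" unfolding L_def using n by (simp add: exp_of_nat_mult)
    moreover have "L\<^sup>2 = exp (2 * ln L)" using L2 by (simp add: exp_of_nat_mult[of 2, simplified])
    moreover have "real k * L + - real k * t0 = - (2 * ln L) + - real k * w"
      unfolding t0_def using kp by (simp add: algebra_simps)
    ultimately show ?thesis by (simp add: exp_add[symmetric] exp_minus field_simps)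
  qed
  have "real n ^ k * (1 + t\<^sup>2) * exp (- real k * t)
        = real n ^ k * (exp (- real k * t) + t\<^sup>2 * exp (- real k * t))"
    by (simp add: algebra_simps)
  also have "\<dots> \<le> real n ^ k * (exp (- real k * t0) + t0\<^sup>2 * exp (- real k * t0))"
    using power2_mult_exp_antimono[OF k t0 t0t] t0t kp by (intro mult_left_mono add_mono) auto
  also have "\<dots> = (1 + t0\<^sup>2) * (real n ^ k * exp (- real k * t0))" by (simp add: algebra_simps)
  also have "\<dots> = (1 / L\<^sup>2 + (t0 / L)\<^sup>2) * exp (- real k * w)"
    unfolding key using L2 by (simp add: field_simps power_divide)
  also have "\<dots> \<le> (1 + (3 + w)\<^sup>2) * exp (- w)"
  proof (rule mult_mono)
    have "t0 \<le> L * (3 + w)"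
    proof -
      have "2 / real k * ln L \<le> 2 * ln L" using k2 lnL by (intro mult_right_mono) auto
      then have "2 / real k * ln L \<le> 2 * L" using lnL by linarith
      moreover have "w \<le> L * w" using L2 w by (simp add: mult_le_cancel_right1)
      ultimately show ?thesis unfolding t0_def by (simp add: algebra_simps)
    qed
    moreover have "0 \<le> t0" using t0 divide_nonneg_nonneg[of 2 "real k"] by linarith
    ultimately have "t0 / L \<le> 3 + w" "0 \<le> t0 / L" using L2 by (auto simp: field_simps)
    then have "(t0 / L)\<^sup>2 \<le> (3 + w)\<^sup>2" by (intro power_mono) auto
    moreover have "1 / L\<^sup>2 \<le> 1"
    proof -
      have "1 * 1 \<le> L * L" using L2 by (intro mult_mono) auto
      then show ?thesis by (simp add: power2_eq_square)
    qed
    ultimately show "1 / L\<^sup>2 + (t0 / L)\<^sup>2 \<le> 1 + (3 + w)\<^sup>2" by linarith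
    show "exp (- real k * w) \<le> exp (- w)" using k w by (simp add: mult_le_cancel_right1)
  qed (simp_all add: add_nonneg_nonneg)
  finally show ?thesis .
qed

lemma witness_term_tendsto_zero:
  fixes u :: "nat \<Rightarrow> real"
  assumes u: "\<And>n. 0 \<le> u n" and alt: "2 \<le> k \<or> u \<longlonglongrightarrow> 0 \<or> filterlim u at_top sequentially"
  shows "(\<lambda>n. u n ^ (2 * k + 1) * exp (- u n / 2) / real n ^ (k - 1)) \<longlonglongrightarrow> 0"
proof (cases "2 \<le> k")
  case True
  define M where "M = (real (2 * k + 1) / (1 / 2)) ^ (2 * k + 1)"
  show ?thesis
  proof (rule tendsto_sandwich[of "\<lambda>_. 0" _ _ "\<lambda>n. M * (1 / real n)"])
    show "\<forall>\<^sub>F n in sequentially. 0 \<le> u n ^ (2 * k + 1) * exp (- u n / 2) / real n ^ (k - 1)"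
      using u by simp
    show "\<forall>\<^sub>F n in sequentially. u n ^ (2 * k + 1) * exp (- u n / 2) / real n ^ (k - 1) \<le> M * (1 / real n)"
      using eventually_ge_at_top[of 1]
    proof eventually_elim
      case (elim n)
      have "u n ^ (2 * k + 1) * exp (- u n / 2) \<le> M * exp (1 / 2 * u n) * exp (- u n / 2)"
        unfolding M_def using u by (intro mult_right_mono power_le_mult_exp) auto
      also have "\<dots> = M" by (simp flip: exp_add)
      finally have X: "u n ^ (2 * k + 1) * exp (- u n / 2) \<le> M" .
      have "real n \<le> real n ^ (k - 1)"
        using elim True power_increasing[of 1 "k - 1" "real n"] by simp
      then have "u n ^ (2 * k + 1) * exp (- u n / 2) / real n ^ (k - 1)
                 \<le> u n ^ (2 * k + 1) * exp (- u n / 2) / real n"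
        using elim u by (intro divide_left_mono) auto
      also have "\<dots> \<le> M / real n" using X by (rule divide_right_mono) simp
      finally show ?case by simp
    qed
  qed (use tendsto_mult_right_zero[OF lim_1_over_n] in auto)
next
  case False
  have "((\<lambda>x::real. x ^ (2 * k + 1) * exp (- x / 2)) \<longlongrightarrow> 0) at_top" by real_asymp
  then have "(\<lambda>n. u n ^ (2 * k + 1) * exp (- u n / 2)) \<longlonglongrightarrow> 0"
    using alt False
  proof (elim disjE)
    assume "u \<longlonglongrightarrow> 0"
    then show ?thesis by (auto intro!: tendsto_eq_intros)
  qed (auto intro: filterlim_compose)
  moreover have "k - 1 = 0" using False by simp
  ultimately show ?thesis by simp
qed

lemma prob_star_k_separation_le_threshold:
  fixes p w :: real and k n :: nat
  defines "c \<equiv> exp ((real k)\<^sup>2) + real k * exp (real k * (real k + 2) + 2 * (real k)\<^sup>2)"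
  assumes k: "1 \<le> k" and n: "2 * k + 9 \<le> n" and p: "0 \<le> p" "p \<le> 1" and w: "0 \<le> w"
    and t: "(ln (real n) + 2 / real k * ln (ln (real n)) + w) / real n \<le> p"
  shows "gnp_prob n p (\<lambda>E. \<exists>a S. star_k_separation n k E a S)
    \<le> c * ((1 + (3 + w)\<^sup>2) * exp (- w)) + real n ^ (k + 1) * exp (- sqrt (real n) / 4)
      + exp (real k + 2) * ((real n * (1 - p)) ^ (2 * k + 1) * exp (- (real n * (1 - p)) / 2)
          / real n ^ (k - 1))"
proof -
  have "ln (real n) + 2 / real k * ln (ln (real n)) + w \<le> real n * p"
    using t n by (simp add: pos_divide_le_eq mult.commute)
  then have "real n ^ k * (1 + (real n * p)\<^sup>2) * exp (- real k * (real n * p))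
             \<le> (1 + (3 + w)\<^sup>2) * exp (- w)"
    using threshold_bound[OF k] n w by simp
  then have "c * real n ^ k * (1 + (real n * p)\<^sup>2) * exp (- real k * (real n * p))
             \<le> c * ((1 + (3 + w)\<^sup>2) * exp (- w))"
    unfolding mult.assoc by (rule mult_left_mono) (simp add: c_def)
  then show ?thesis
    using prob_star_k_separation_le[OF k, of n p] n p unfolding c_def by simp
qed

theorem proposition3p1:
  fixes p :: "nat \<Rightarrow> real" and k :: nat and \<omega> :: "nat \<Rightarrow> real"
  assumes "k \<ge> 1"
    and "\<And>n. 0 \<le> p n \<and> p n \<le> 1"
    and "filterlim \<omega> at_top sequentially"
    and "\<forall>\<^sub>F n in sequentially.
           p n \<ge> (ln (real n) + (2 / real k) * ln (ln (real n)) + \<omega> n) / real n"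
    and "k \<ge> 2 \<or> ((\<lambda>n. real n * (1 - p n)) \<longlonglongrightarrow> 0)
           \<or> filterlim (\<lambda>n. real n * (1 - p n)) at_top sequentially"
  shows "(\<lambda>n. gnp_prob n (p n) (\<lambda>E. \<not> (\<exists>a S. star_k_separation n k E a S)))
           \<longlonglongrightarrow> 1"
proof -
  define c where "c = exp ((real k)\<^sup>2) + real k * exp (real k * (real k + 2) + 2 * (real k)\<^sup>2)"
  define u where "u n = real n * (1 - p n)" for n
  define P where "P n = gnp_prob n (p n) (\<lambda>E. \<exists>a S. star_k_separation n k E a S)" for n
  define D where "D n = c * ((1 + (3 + \<omega> n)\<^sup>2) * exp (- \<omega> n)) + real n ^ (k + 1) * exp (- sqrt (real n) / 4)
    + exp (real k + 2) * (u n ^ (2 * k + 1) * exp (- u n / 2) / real n ^ (k - 1))" for n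
  have bound: "\<forall>\<^sub>F n in sequentially. P n \<le> D n"
    using assms(4) eventually_ge_at_top[of "2 * k + 9"] assms(3)[unfolded filterlim_at_top, rule_format, of 0]
    by eventually_elim
       (use prob_star_k_separation_le_threshold[OF assms(1)] assms(2) in \<open>simp add: P_def D_def u_def c_def\<close>)
  have D: "D \<longlonglongrightarrow> 0"
  proof -
    have "((\<lambda>w::real. (1 + (3 + w)\<^sup>2) * exp (- w)) \<longlongrightarrow> 0) at_top" by real_asymp
    then have "(\<lambda>n. (1 + (3 + \<omega> n)\<^sup>2) * exp (- \<omega> n)) \<longlonglongrightarrow> 0"
      using assms(3) by (rule filterlim_compose)
    moreover have "(\<lambda>n::nat. real n ^ (k + 1) * exp (- sqrt (real n) / 4)) \<longlonglongrightarrow> 0" by real_asymp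
    moreover have "(\<lambda>n. u n ^ (2 * k + 1) * exp (- u n / 2) / real n ^ (k - 1)) \<longlonglongrightarrow> 0"
      using assms(2,5) by (intro witness_term_tendsto_zero) (auto simp: u_def[abs_def])
    ultimately show ?thesis
      unfolding D_def by (intro tendsto_add_zero tendsto_mult_right_zero)
  qed
  have "0 \<le> P n" for n
    unfolding P_def gnp_prob_eq_subset_prob using assms(2) by (simp add: subset_prob_nonneg)
  then have "P \<longlonglongrightarrow> 0"
    by (intro tendsto_sandwich[OF _ bound tendsto_const D]) simp
  then have "(\<lambda>n. 1 - P n) \<longlonglongrightarrow> 1 - 0" by (intro tendsto_diff tendsto_const)
  then show ?thesis
    unfolding P_def gnp_prob_eq_subset_prob subset_prob_Not[OF finite_all_edges] by simp
qed

end
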